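(* Let $P, Q \subseteq \mathbb{R}^d$ be full-dimensional semi-rational polytopes and let $D \subseteq (0, \infty)$ be a dense subset such that $L_{P+w}(s) = L_{Q+w}(s)$ for all $w \in \mathbb{Z}^d$ and all $s \in D$. Then $P = Q$.
   Context: For a polytope $P \subseteq \mathbb{R}^d$ and real $s \ge 0$, $L_P(s) = \#(sP \cap \mathbb{Z}^d)$, where $sP = \{sx : x \in P\}$. A polytope is semi-rational if it can be written as $\bigcap_{i=1}^n \{x \in \mathbb{R}^d : \langle a_i, x\rangle \le b_i\}$ with all $a_i \in \mathbb{Z}^d$ and all $b_i \in \mathbb{R}$. *)

theory Defs
  imports "HOL-Analysis.Analysis"
begin

definition int_vec :: "(real ^ 'n) set" where
  "int_vec = {x. \<forall>i. x $ i \<in> \<int>}"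

definition lattice_count :: "(real ^ 'n) set \<Rightarrow> real \<Rightarrow> nat" where
  "lattice_count P s = card ((\<lambda>x. s *\<^sub>R x) ` P \<inter> int_vec)"

definition semi_rational :: "(real ^ 'n) set \<Rightarrow> bool" where
  "semi_rational P \<longleftrightarrow> polytope P \<and>
     (\<exists>H :: ((real ^ 'n) \<times> real) list. (\<forall>(a, b) \<in> set H. a \<in> int_vec) \<and>
        P = {x. \<forall>(a, b) \<in> set H. a \<bullet> x \<le> b})"

definition full_dimensional :: "(real ^ 'n) set \<Rightarrow> bool" where
  "full_dimensional P \<longleftrightarrow> aff_dim P = int CARD('n)"

end

theory Submission
  imports Defs
begin

text \<open>If P and Q lie in the ball of radius R and 2sR < 1, then every translate s(P + w) lies
  in a ball of radius < 1/2 and so contains at most one lattice point. Equality of the counts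
  therefore says that P and Q contain the same points of the form z/s - w with z, w integral.
  Choosing s \<in> D with 1/s just above an integer N makes z/s - Nz a point of an arbitrarily
  fine lattice, so these points are dense. Two convex bodies agreeing on a dense set coincide,
  because a convex body is the closure of its interior.\<close>

lemma int_vec_dist_ge_1:
  fixes x y :: "real ^ 'n"
  assumes "x \<in> int_vec" "y \<in> int_vec" "x \<noteq> y"
  shows "1 \<le> dist x y"
proof -
  obtain i where i: "x$i \<noteq> y$i" using assms(3) vec_eq_iff by blast
  have "x$i - y$i \<in> \<int>" using assms(1,2) unfolding int_vec_def by auto
  then have "1 \<le> \<bar>(x - y)$i\<bar>" using i by (simp add: Ints_nonzero_abs_ge1)
  also have "\<dots> \<le> norm (x - y)" by (rule component_le_norm_cart)
  finally show ?thesis by (simp add: dist_norm)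
qed

lemma int_vec_cball_subsingleton:
  fixes c :: "real ^ 'n"
  assumes "2 * e < 1" "a \<in> int_vec \<inter> cball c e" "b \<in> int_vec \<inter> cball c e"
  shows "a = b"
proof (rule ccontr)
  assume "a \<noteq> b"
  then have "1 \<le> dist a b" using assms int_vec_dist_ge_1 by blast
  moreover have "dist a b \<le> dist c a + dist c b" by (metis dist_commute dist_triangle)
  ultimately show False using assms by auto
qed

lemma card_eq_imp_eq_subsingleton:
  assumes "A \<subseteq> C" "B \<subseteq> C" "\<And>a b. a \<in> C \<Longrightarrow> b \<in> C \<Longrightarrow> a = b" "card A = card B"
  shows "A = B"
proof -
  have "C = {} \<or> (\<exists>c. C = {c})" using assms(3) by blast
  then have "finite C" by auto
  moreover have "A = {} \<or> A = C" "B = {} \<or> B = C" using assms(1-3) by blast+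
  ultimately show ?thesis using assms(4) by (auto simp: card_eq_0_iff)
qed

lemma mem_scaled_translation_iff:
  fixes S :: "(real ^ 'n) set"
  assumes "s \<noteq> 0"
  shows "z \<in> (\<lambda>x. s *\<^sub>R x) ` ((\<lambda>x. x + w) ` S) \<longleftrightarrow> (1/s) *\<^sub>R z - w \<in> S"
proof
  assume "z \<in> (\<lambda>x. s *\<^sub>R x) ` ((\<lambda>x. x + w) ` S)"
  then show "(1/s) *\<^sub>R z - w \<in> S" using assms by auto
next
  assume "(1/s) *\<^sub>R z - w \<in> S"
  moreover have "z = s *\<^sub>R (((1/s) *\<^sub>R z - w) + w)" using assms by simp
  ultimately show "z \<in> (\<lambda>x. s *\<^sub>R x) ` ((\<lambda>x. x + w) ` S)" by blast
qed

lemma scaled_translation_subset_cball: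
  fixes S :: "(real ^ 'n) set"
  assumes "S \<subseteq> cball 0 R" "0 \<le> s"
  shows "(\<lambda>x. s *\<^sub>R x) ` ((\<lambda>x. x + w) ` S) \<subseteq> cball (s *\<^sub>R w) (s * R)"
proof clarify
  fix p assume "p \<in> S"
  then have "s * norm p \<le> s * R" using assms by (intro mult_left_mono) auto
  then show "s *\<^sub>R (p + w) \<in> cball (s *\<^sub>R w) (s * R)"
    using assms(2) by (simp add: dist_norm algebra_simps)
qed

lemma int_vec_scaled_approx:
  fixes x :: "real ^ 'n" and u :: real
  assumes "0 < u"
  shows "\<exists>k\<in>int_vec. dist (u *\<^sub>R k) x \<le> CARD('n) * u"
proof
  define k :: "real ^ 'n" where "k = (\<chi> i. of_int \<lfloor>x$i / u\<rfloor>)"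
  show "k \<in> int_vec" unfolding k_def int_vec_def by auto
  have "\<bar>(u *\<^sub>R k - x) $ i\<bar> \<le> u" for i
  proof -
    have "of_int \<lfloor>x$i / u\<rfloor> * u \<le> x$i" "x$i < of_int \<lfloor>x$i / u\<rfloor> * u + u"
      using assms floor_divide_lower[of u "x$i"] floor_divide_upper[of u "x$i"]
      by (auto simp: algebra_simps)
    then show ?thesis unfolding k_def by (simp add: algebra_simps)
  qed
  then have "(\<Sum>i\<in>UNIV. \<bar>(u *\<^sub>R k - x) $ i\<bar>) \<le> CARD('n) * u"
    using sum_mono[of UNIV "\<lambda>i. \<bar>(u *\<^sub>R k - x) $ i\<bar>" "\<lambda>_. u"] by simp
  then show "dist (u *\<^sub>R k) x \<le> CARD('n) * u"
    using norm_le_l1_cart[of "u *\<^sub>R k - x"] by (simp add: dist_norm)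
qed

lemma dense_subset_interval:
  fixes D :: "real set"
  assumes "{0<..} \<subseteq> closure D" "0 < a" "a < b"
  obtains s where "s \<in> D" "a < s" "s < b"
proof -
  have "(a + b) / 2 \<in> closure D" using assms by auto
  then obtain s where "s \<in> D" "dist s ((a + b) / 2) < (b - a) / 2"
    using assms(3) closure_approachable by (metis diff_gt_0_iff_gt half_gt_zero)
  moreover from this(2) have "a < s" "s < b"
    unfolding dist_real_def by argo+
  ultimately show ?thesis using that by blast
qed

lemma lattice_count_eq_imp_mem_iff:
  fixes P Q :: "(real ^ 'n) set"
  assumes "P \<union> Q \<subseteq> cball 0 R" "0 < s" "2 * (s * R) < 1"
    and "lattice_count ((\<lambda>x. x + w) ` P) s = lattice_count ((\<lambda>x. x + w) ` Q) s"
    and "z \<in> int_vec"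
  shows "(1/s) *\<^sub>R z - w \<in> P \<longleftrightarrow> (1/s) *\<^sub>R z - w \<in> Q"
proof -
  let ?A = "(\<lambda>x. s *\<^sub>R x) ` ((\<lambda>x. x + w) ` P) \<inter> int_vec"
  let ?B = "(\<lambda>x. s *\<^sub>R x) ` ((\<lambda>x. x + w) ` Q) \<inter> int_vec"
  let ?C = "cball (s *\<^sub>R w) (s * R) \<inter> int_vec"
  have "?A \<subseteq> ?C" "?B \<subseteq> ?C"
    by (intro Int_mono scaled_translation_subset_cball order_refl; use assms(1,2) in auto)+
  moreover have "a = b" if "a \<in> ?C" "b \<in> ?C" for a b
    using int_vec_cball_subsingleton[OF assms(3)] that by blast
  moreover have "card ?A = card ?B" using assms(4) unfolding lattice_count_def .
  ultimately have "?A = ?B" by (rule card_eq_imp_eq_subsingleton)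
  then have "z \<in> ?A \<longleftrightarrow> z \<in> ?B" by simp
  then show ?thesis
    using assms(2,5) mem_scaled_translation_iff[of s z w P] mem_scaled_translation_iff[of s z w Q]
    by simp
qed

lemma small_scale_grid_dense:
  fixes D :: "real set"
  assumes "{0<..} \<subseteq> closure D"
  shows "closure {(1/s) *\<^sub>R z - w | s z w :: real ^ 'n.
           s \<in> D \<and> 2 * (s * R) < 1 \<and> z \<in> int_vec \<and> w \<in> int_vec} = UNIV"
    (is "closure ?X = _")
proof -
  have "\<exists>y\<in>?X. dist y x < r" if "0 < r" for x :: "real ^ 'n" and r
  proof -
    define n where "n = real CARD('n)"
    have "0 < n" unfolding n_def by simp
    define \<eta> where "\<eta> = r / n"
    have "0 < \<eta>" "n * \<eta> = r" unfolding \<eta>_def using \<open>0 < n\<close> \<open>0 < r\<close> by auto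
    obtain N :: nat where N: "max (2 * R) 0 < N" using reals_Archimedean2 by blast
    obtain s where s: "s \<in> D" "1 / (N + \<eta>) < s" "s < 1 / N"
      using dense_subset_interval[OF assms, of "1 / (N + \<eta>)" "1 / N"] N \<open>0 < \<eta>\<close>
      by (auto simp: field_simps)
    have "0 < s" using s(2) N \<open>0 < \<eta>\<close> by (smt (verit) divide_pos_pos)
    define u where "u = 1 / s - N"
    have u: "0 < u" "u < \<eta>"
      using s \<open>0 < s\<close> N \<open>0 < \<eta>\<close> unfolding u_def by (auto simp: field_simps)
    obtain k where k: "k \<in> int_vec" "dist (u *\<^sub>R k) x \<le> n * u"
      using int_vec_scaled_approx[OF u(1)] unfolding n_def by blast
    have "s * (2 * R) < s * N" using N \<open>0 < s\<close> by (intro mult_strict_left_mono) auto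
    also have "s * N < 1" using s(3) N by (simp add: field_simps)
    finally have "2 * (s * R) < 1" by simp
    moreover have "real N *\<^sub>R k \<in> int_vec" using k(1) unfolding int_vec_def by auto
    moreover have "u *\<^sub>R k = (1/s) *\<^sub>R k - real N *\<^sub>R k"
      unfolding u_def by (simp add: algebra_simps)
    ultimately have "u *\<^sub>R k \<in> ?X" using s(1) k(1) by blast
    moreover have "n * u < r" using \<open>0 < n\<close> u \<open>n * \<eta> = r\<close> by (metis mult_strict_left_mono)
    ultimately show ?thesis using k(2) by fastforce
  qed
  then show ?thesis using closure_approachable by blast
qed

lemma convex_subset_if_agree_on_dense:
  fixes P Q :: "'a::euclidean_space set"
  assumes "convex P" "closed P" "interior P \<noteq> {}" "closed Q"
    and "closure X = UNIV" "\<And>x. x \<in> X \<Longrightarrow> x \<in> P \<Longrightarrow> x \<in> Q"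
  shows "P \<subseteq> Q"
proof -
  have "(interior P - Q) \<inter> X = {}" using assms(6) interior_subset by blast
  then have "interior P - Q = {}"
    using open_Int_closure_eq_empty[of "interior P - Q" X] assms(4,5) by (simp add: open_Diff)
  then have "closure (interior P) \<subseteq> Q" using assms(4) by (simp add: closure_minimal)
  then show ?thesis using convex_closure_interior[OF assms(1,3)] assms(2) by simp
qed

lemma full_dimensional_convex_interior_nonempty:
  fixes P :: "(real ^ 'n) set"
  assumes "convex P" "full_dimensional P"
  shows "interior P \<noteq> {}"
proof -
  have "P \<noteq> {}" using assms(2) unfolding full_dimensional_def by auto
  then show ?thesis using assms interior_rel_interior_gen[of P] rel_interior_eq_empty[of P]
    unfolding full_dimensional_def by simp
qed

theorem corollary4p4:
  fixes P Q :: "(real ^ 'n) set" and D :: "real set"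
  assumes "semi_rational P" and "full_dimensional P"
    and "semi_rational Q" and "full_dimensional Q"
    and "D \<subseteq> {0<..}" and "{0<..} \<subseteq> closure D"
    and "\<And>w s. w \<in> int_vec \<Longrightarrow> s \<in> D \<Longrightarrow>
           lattice_count ((\<lambda>x. x + w) ` P) s = lattice_count ((\<lambda>x. x + w) ` Q) s"
  shows "P = Q"
proof -
  have "polytope P" "polytope Q" using assms(1,3) unfolding semi_rational_def by auto
  then have P: "convex P" "compact P" and Q: "convex Q" "compact Q"
    by (auto simp: polytope_imp_convex polytope_imp_compact)
  then obtain R where "\<forall>x\<in>P \<union> Q. norm x \<le> R"
    by (metis bounded_Un bounded_iff compact_imp_bounded)
  then have R: "P \<union> Q \<subseteq> cball 0 R" by auto
  define X where "X = {(1/s) *\<^sub>R z - w | s z w :: real ^ 'n.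
           s \<in> D \<and> 2 * (s * R) < 1 \<and> z \<in> int_vec \<and> w \<in> int_vec}"
  have dense: "closure X = UNIV" unfolding X_def using small_scale_grid_dense[OF assms(6)] .
  have agree: "x \<in> P \<longleftrightarrow> x \<in> Q" if "x \<in> X" for x
    using that assms(5,7) lattice_count_eq_imp_mem_iff[OF R] unfolding X_def by blast
  show ?thesis
  proof
    show "P \<subseteq> Q"
      by (rule convex_subset_if_agree_on_dense[OF P(1) _ _ _ dense])
        (use agree P Q assms(2) full_dimensional_convex_interior_nonempty
          in \<open>auto simp: compact_imp_closed\<close>)
    show "Q \<subseteq> P"
      by (rule convex_subset_if_agree_on_dense[OF Q(1) _ _ _ dense])
        (use agree P Q assms(4) full_dimensional_convex_interior_nonempty
          in \<open>auto simp: compact_imp_closed\<close>)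
  qed
qed

end
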